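(* Let $f$ and $g$ be balanced flows such that the product $fg$ is defined. Then $fg$ is balanced and $h(fg)\le\max\{h(f),h(g)\}$. Consequently the set $\mathcal B$ of balanced wirings is closed under products of wirings (and is a semiring).
   Context: Terms: first-order terms built from an infinite set of variables, a binary function symbol $\bullet$ written infix, infinitely many constant symbols including a distinguished constant $\star$, and for each $n\ge1$ at least one $n$-ary function symbol. $\mathrm{var}(t)$ is the set of variables of $t$. The height $h(t)$ is the maximal distance from the root to a node in the tree of $t$; the height of an occurrence of a variable in $t$ is its distance from the root. A renaming is a bijective substitution mapping variables to variables. A flow is a pair of terms written $t\leftarrow u$ with $\mathrm{var}(t)\subseteq\mathrm{var}(u)$, considered up to renaming. The product of flows $u\leftarrow v$ and $t\leftarrow w$ (representatives chosen with disjoint variable sets) is defined iff $v$ and $t$ are unifiable, and then equals $u\theta\leftarrow w\theta$ with $\theta$ a most general unifier of $v,t$. A wiring is a finite set of flows; product of wirings $FG=\{fg: f\in F,g\in G, fg\text{ defined}\}$, sum is union, $0$ is the empty wiring. A flow $t\leftarrow u$ is balanced if for every variable $x$, all occurrences of $x$ in $t$ and in $u$ have the same height; a wiring is balanced if all its flows are balanced; $\mathcal B$ is the set of balanced wirings. The height of a flow $t\leftarrow u$ is $\max\{h(t),h(u)\}$. A semiring is a set of wirings containing $0$ and closed under finite sums and products. *)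

theory Defs
  imports Main
begin

datatype sym = Bullet | Star | Cst nat | Sym nat nat

fun arity :: "sym \<Rightarrow> nat" where
  "arity Bullet = 2"
| "arity Star = 0"
| "arity (Cst _) = 0"
| "arity (Sym n _) = n"

datatype trm = Var nat | App sym "trm list"

fun wf_trm :: "trm \<Rightarrow> bool" where
  "wf_trm (Var x) = True"
| "wf_trm (App f ts) = (length ts = arity f \<and> (\<forall>t\<in>set ts. wf_trm t))"

fun vars :: "trm \<Rightarrow> nat set" where
  "vars (Var x) = {x}"
| "vars (App f ts) = \<Union> (vars ` set ts)"

fun hgt :: "trm \<Rightarrow> nat" where
  "hgt (Var x) = 0"
| "hgt (App f ts) = (if ts = [] then 0 else Suc (Max (hgt ` set ts)))"

fun occ_heights :: "nat \<Rightarrow> trm \<Rightarrow> nat set" where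
  "occ_heights x (Var y) = (if x = y then {0} else {})"
| "occ_heights x (App f ts) = Suc ` \<Union> (occ_heights x ` set ts)"

fun sapp :: "(nat \<Rightarrow> trm) \<Rightarrow> trm \<Rightarrow> trm" where
  "sapp \<sigma> (Var x) = \<sigma> x"
| "sapp \<sigma> (App f ts) = App f (map (sapp \<sigma>) ts)"

definition renaming :: "(nat \<Rightarrow> trm) \<Rightarrow> bool" where
  "renaming \<rho> \<longleftrightarrow> (\<exists>\<pi>. bij \<pi> \<and> \<rho> = (\<lambda>x. Var (\<pi> x)))"

definition unifier :: "(nat \<Rightarrow> trm) \<Rightarrow> trm \<Rightarrow> trm \<Rightarrow> bool" where
  "unifier \<theta> s t \<longleftrightarrow> sapp \<theta> s = sapp \<theta> t"

definition mgu :: "(nat \<Rightarrow> trm) \<Rightarrow> trm \<Rightarrow> trm \<Rightarrow> bool" where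
  "mgu \<theta> s t \<longleftrightarrow> unifier \<theta> s t \<and>
     (\<forall>\<sigma>. unifier \<sigma> s t \<longrightarrow> (\<exists>\<tau>. \<forall>x. \<sigma> x = sapp \<tau> (\<theta> x)))"

section \<open>Flows (represented by pairs (t,u), meaning t \<leftarrow> u)\<close>

definition is_flow :: "trm \<times> trm \<Rightarrow> bool" where
  "is_flow p \<longleftrightarrow> wf_trm (fst p) \<and> wf_trm (snd p) \<and> vars (fst p) \<subseteq> vars (snd p)"

definition balanced :: "trm \<times> trm \<Rightarrow> bool" where
  "balanced p \<longleftrightarrow> (\<forall>x. \<forall>a \<in> occ_heights x (fst p) \<union> occ_heights x (snd p).
                     \<forall>b \<in> occ_heights x (fst p) \<union> occ_heights x (snd p). a = b)"

definition flow_hgt :: "trm \<times> trm \<Rightarrow> nat" where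
  "flow_hgt p = max (hgt (fst p)) (hgt (snd p))"

text \<open>r is (a representative of) the product of the flows represented by
(u,v) and (t,w): the second flow is renamed apart by a renaming \<rho>, and
\<theta> is a most general unifier of v and t\<rho>; then r = u\<theta> \<leftarrow> w\<rho>\<theta>.
The product is defined iff such an r exists.\<close>

definition flow_prod :: "trm \<times> trm \<Rightarrow> trm \<times> trm \<Rightarrow> trm \<times> trm \<Rightarrow> bool" where
  "flow_prod f g r \<longleftrightarrow> (\<exists>\<rho> \<theta>. renaming \<rho> \<and>
      (vars (fst f) \<union> vars (snd f)) \<inter>
        (vars (sapp \<rho> (fst g)) \<union> vars (sapp \<rho> (snd g))) = {} \<and>
      mgu \<theta> (snd f) (sapp \<rho> (fst g)) \<and>
      r = (sapp \<theta> (fst f), sapp \<theta> (sapp \<rho> (snd g))))"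

definition ren_eq :: "trm \<times> trm \<Rightarrow> trm \<times> trm \<Rightarrow> bool" where
  "ren_eq p q \<longleftrightarrow> (\<exists>\<rho>. renaming \<rho> \<and> q = (sapp \<rho> (fst p), sapp \<rho> (snd p)))"

definition cls :: "trm \<times> trm \<Rightarrow> (trm \<times> trm) set" where
  "cls p = {q. ren_eq p q}"

text \<open>A flow (up to renaming) is a renaming class of a representative flow.\<close>

definition flow_classes :: "(trm \<times> trm) set set" where
  "flow_classes = {cls p | p. is_flow p}"

definition wiring :: "(trm \<times> trm) set set \<Rightarrow> bool" where
  "wiring W \<longleftrightarrow> finite W \<and> W \<subseteq> flow_classes"

text \<open>Product of two flow classes: the set of classes of products of
representatives (empty if undefined; a singleton otherwise).\<close>

definition cprod :: "(trm \<times> trm) set \<Rightarrow> (trm \<times> trm) set \<Rightarrow> (trm \<times> trm) set set" where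
  "cprod F G = {cls r | r. \<exists>p\<in>F. \<exists>q\<in>G. flow_prod p q r}"

definition wprod :: "(trm \<times> trm) set set \<Rightarrow> (trm \<times> trm) set set \<Rightarrow> (trm \<times> trm) set set" where
  "wprod A B = \<Union> {cprod f g | f g. f \<in> A \<and> g \<in> B}"

definition balanced_wirings :: "(trm \<times> trm) set set set" where
  "balanced_wirings = {W. wiring W \<and> (\<forall>c\<in>W. \<forall>p\<in>c. balanced p)}"

definition semiring_of_wirings :: "(trm \<times> trm) set set set \<Rightarrow> bool" where
  "semiring_of_wirings S \<longleftrightarrow> (\<forall>W\<in>S. wiring W) \<and> {} \<in> S \<and>
     (\<forall>A\<in>S. \<forall>B\<in>S. A \<union> B \<in> S) \<and> (\<forall>A\<in>S. \<forall>B\<in>S. wprod A B \<in> S)"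

end

theory Submission
  imports Defs "HOL-Library.Countable_Set"
begin

(* Let f = u \<leftarrow> v and g = t \<leftarrow> w be flows, g renamed apart, and \<theta> an mgu of v and t.
   The whole argument rests on one device: whenever a substitution \<sigma> built from \<theta> is again
   a unifier of v and t, it factors through \<theta>, and this pins down the shape of \<theta>.

   We first call a term "at levels d" if every occurrence of a variable x lies at height d x;
   a flow is balanced iff both sides are at a common level function.  If v and t are at
   levels d, three unifiers derived from \<theta> give three facts:
   - tagging each variable of \<theta> x with its height plus d x shows that instantiating terms at
     levels d by \<theta> yields terms at common levels again (hence balancedness of fg);
   - truncating \<theta> x at depth max(h v, h t) - d x shows that \<theta> x fits below that height,
     which bounds the height of u\<theta> and w\<theta>;
   - repairing arity errors shows that \<theta> is well-formed, so fg is again a flow.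
   Finally mgus are unique up to renaming, so the product of two flow classes is at most
   one class; hence products of balanced wirings are finite sets of balanced classes, and the
   balanced wirings form a semiring. *)

lemma sapp_comp: "sapp \<sigma> (sapp \<tau> t) = sapp (\<lambda>x. sapp \<sigma> (\<tau> x)) t"
  by (induction t) auto

lemma sapp_cong: "(\<And>x. x \<in> vars t \<Longrightarrow> \<sigma> x = \<tau> x) \<Longrightarrow> sapp \<sigma> t = sapp \<tau> t"
  by (induction t) auto

lemma sapp_Var: "sapp Var t = t"
  by (induction t) (auto simp: map_idI)

lemma finite_vars: "finite (vars t)"
  by (induction t) auto

lemma occ_heights_empty_iff: "occ_heights x t = {} \<longleftrightarrow> x \<notin> vars t"
  by (induction t) auto

lemma vars_sapp: "vars (sapp \<sigma> t) = (\<Union>x\<in>vars t. vars (\<sigma> x))"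
  by (induction t) auto

lemma wf_sapp: "wf_trm t \<Longrightarrow> (\<And>x. x \<in> vars t \<Longrightarrow> wf_trm (\<theta> x)) \<Longrightarrow> wf_trm (sapp \<theta> t)"
  by (induction t) auto

lemma hgt_App_le:
  "k + hgt (App f ts) \<le> B \<longleftrightarrow> k \<le> B \<and> (\<forall>c\<in>set ts. Suc k + hgt c \<le> B)"
proof (cases "ts = []")
  case False
  then have "k + hgt (App f ts) \<le> B \<longleftrightarrow> Suc k \<le> B \<and> Max (hgt ` set ts) \<le> B - Suc k"
    by (simp del: Max_le_iff) arith
  also have "\<dots> \<longleftrightarrow> Suc k \<le> B \<and> (\<forall>c\<in>set ts. hgt c \<le> B - Suc k)"
    using False by simp
  finally show ?thesis
    using False by (auto simp: neq_Nil_conv)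
qed simp

lemma occ_height_le_hgt: "h \<in> occ_heights x t \<Longrightarrow> h \<le> hgt t"
proof (induction t arbitrary: h)
  case (App f ts)
  then obtain c h' where c: "c \<in> set ts" "h' \<in> occ_heights x c" "h = Suc h'"
    by auto
  have "Suc (hgt c) \<le> hgt (App f ts)"
    using hgt_App_le[of 0 f ts "hgt (App f ts)"] c(1) by simp
  with App.IH[OF c(1,2)] c(3) show ?case by simp
qed (auto split: if_splits)

lemma occ_heights_sapp:
  "a \<in> occ_heights y (sapp \<theta> t) \<Longrightarrow>
   \<exists>x h j. h \<in> occ_heights x t \<and> j \<in> occ_heights y (\<theta> x) \<and> a = h + j"
proof (induction t arbitrary: a)
  case (App f ts)
  then obtain c a' where c: "c \<in> set ts" "a' \<in> occ_heights y (sapp \<theta> c)" "a = Suc a'"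
    by auto
  from App.IH[OF c(1,2)] obtain x h j where
    "h \<in> occ_heights x c" "j \<in> occ_heights y (\<theta> x)" "a' = h + j"
    by blast
  then have "Suc h \<in> occ_heights x (App f ts)" "j \<in> occ_heights y (\<theta> x)" "a = Suc h + j"
    using c by auto
  then show ?case by blast
qed force

section \<open>Levels of variable occurrences\<close>

definition at_levels :: "(nat \<Rightarrow> nat) \<Rightarrow> trm \<Rightarrow> bool" where
  "at_levels d t \<longleftrightarrow> (\<forall>x. \<forall>h\<in>occ_heights x t. h = d x)"

lemma balanced_iff_levels: "balanced p \<longleftrightarrow> (\<exists>d. at_levels d (fst p) \<and> at_levels d (snd p))"
proof
  assume bal: "balanced p"
  define occ where "occ x = occ_heights x (fst p) \<union> occ_heights x (snd p)" for x
  define d where "d x = (SOME h. h \<in> occ x)" for x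
  have "h = d x" if "h \<in> occ x" for x h
  proof -
    have "d x \<in> occ x"
      unfolding d_def using that by (rule someI)
    with that bal show ?thesis
      unfolding balanced_def occ_def by blast
  qed
  then show "\<exists>d. at_levels d (fst p) \<and> at_levels d (snd p)"
    unfolding at_levels_def occ_def by blast
next
  assume "\<exists>d. at_levels d (fst p) \<and> at_levels d (snd p)"
  then obtain d where "at_levels d (fst p)" "at_levels d (snd p)"
    by blast
  then show "balanced p"
    unfolding balanced_def at_levels_def by (metis Un_iff)
qed

lemma at_levels_cong:
  assumes "at_levels d t" and "\<And>x. x \<in> vars t \<Longrightarrow> d x = d' x"
  shows "at_levels d' t"
  unfolding at_levels_def
proof (intro allI ballI)
  fix x h assume h: "h \<in> occ_heights x t"
  then have "x \<in> vars t"
    using occ_heights_empty_iff by blast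
  with h assms show "h = d' x"
    unfolding at_levels_def by metis
qed

lemma at_levels_le_hgt:
  assumes "at_levels d t" "x \<in> vars t"
  shows "d x \<le> hgt t"
proof -
  obtain h where "h \<in> occ_heights x t"
    using assms(2) occ_heights_empty_iff by blast
  with assms(1) show ?thesis
    unfolding at_levels_def by (metis occ_height_le_hgt)
qed

lemma at_levels_glue:
  assumes "at_levels d1 a" "at_levels d1 b" "at_levels d2 c" "at_levels d2 e"
    and "(vars a \<union> vars b) \<inter> (vars c \<union> vars e) = {}"
  obtains d where "at_levels d a" "at_levels d b" "at_levels d c" "at_levels d e"
proof
  define d where "d x = (if x \<in> vars a \<union> vars b then d1 x else d2 x)" for x
  show "at_levels d a"
    using assms(1) by (rule at_levels_cong) (simp add: d_def)
  show "at_levels d b"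
    using assms(2) by (rule at_levels_cong) (simp add: d_def)
  show "at_levels d c"
    using assms(3) by (rule at_levels_cong) (use assms(5) in \<open>auto simp: d_def\<close>)
  show "at_levels d e"
    using assms(4) by (rule at_levels_cong) (use assms(5) in \<open>auto simp: d_def\<close>)
qed

section \<open>Three unifiers derived from a most general unifier\<close>

lemma mguD:
  "mgu \<theta> s t \<Longrightarrow> sapp \<theta> s = sapp \<theta> t"
  "mgu \<theta> s t \<Longrightarrow> sapp \<sigma> s = sapp \<sigma> t \<Longrightarrow> \<exists>\<tau>. \<forall>x. \<sigma> x = sapp \<tau> (\<theta> x)"
  by (auto simp: mgu_def unifier_def)

fun ann :: "nat \<Rightarrow> trm \<Rightarrow> trm" where
  "ann k (Var y) = Var (prod_encode (y, k))"
| "ann k (App f ts) = App f (map (ann (Suc k)) ts)"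

lemma ann_sapp:
  "(\<And>x h. h \<in> occ_heights x t \<Longrightarrow> k + h = d x) \<Longrightarrow>
   ann k (sapp \<theta> t) = sapp (\<lambda>x. ann (d x) (\<theta> x)) t"
proof (induction t arbitrary: k)
  case (Var x)
  then show ?case
    using Var[where x = x and h = 0] by simp
next
  case (App f ts)
  have "ann (Suc k) (sapp \<theta> c) = sapp (\<lambda>x. ann (d x) (\<theta> x)) c" if c: "c \<in> set ts" for c
  proof (rule App.IH[OF c])
    show "Suc k + h = d x" if "h \<in> occ_heights x c" for x h
      using App.prems[of "Suc h" x] that c by auto
  qed
  then show ?case by simp
qed

lemma ann_instance:
  "sapp \<tau> s = ann k s \<Longrightarrow> j \<in> occ_heights y s \<Longrightarrow> \<tau> y = Var (prod_encode (y, k + j))"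
proof (induction s arbitrary: k j)
  case (App f ts)
  then obtain c j' where c: "c \<in> set ts" "j' \<in> occ_heights y c" "j = Suc j'"
    by auto
  from App.prems(1) c(1) have "sapp \<tau> c = ann (Suc k) c"
    by (simp add: map_eq_conv)
  from App.IH[OF c(1) this c(2)] c(3) show ?case by simp
qed (auto split: if_splits)

(* Instantiating by an mgu of two terms at levels d sends all terms at levels d to terms at
   common levels e: tagging \<theta> x with d x gives a unifier, which factors through \<theta>, and
   the factor records the level of each variable of the instances. *)
lemma mgu_at_levels:
  assumes mgu: "mgu \<theta> s t" and s: "at_levels d s" and t: "at_levels d t"
  obtains e where "\<And>u. at_levels d u \<Longrightarrow> at_levels e (sapp \<theta> u)"
proof -
  let ?\<theta>' = "\<lambda>x. ann (d x) (\<theta> x)"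
  have "sapp ?\<theta>' s = ann 0 (sapp \<theta> s)" "sapp ?\<theta>' t = ann 0 (sapp \<theta> t)"
    using s t by (auto intro!: ann_sapp[symmetric] simp: at_levels_def)
  then have "sapp ?\<theta>' s = sapp ?\<theta>' t"
    using mguD(1)[OF mgu] by simp
  from mguD(2)[OF mgu this] obtain \<tau> where \<tau>: "\<And>x. ann (d x) (\<theta> x) = sapp \<tau> (\<theta> x)"
    by blast
  define e where "e y = (case \<tau> y of Var z \<Rightarrow> snd (prod_decode z) | _ \<Rightarrow> 0)" for y
  have "at_levels e (sapp \<theta> u)" if u: "at_levels d u" for u
    unfolding at_levels_def
  proof (intro allI ballI)
    fix y a assume "a \<in> occ_heights y (sapp \<theta> u)"
    then obtain x h j where xh: "h \<in> occ_heights x u" "j \<in> occ_heights y (\<theta> x)" "a = h + j"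
      using occ_heights_sapp by blast
    have "\<tau> y = Var (prod_encode (y, d x + j))"
      using ann_instance[OF \<tau>[symmetric] xh(2)] .
    moreover have "h = d x"
      using u xh(1) by (simp add: at_levels_def)
    ultimately show "a = e y"
      using xh(3) by (simp add: e_def)
  qed
  then show ?thesis by (rule that)
qed

fun trunc :: "nat \<Rightarrow> trm \<Rightarrow> trm" where
  "trunc 0 s = (case s of Var y \<Rightarrow> Var 0 | App f ts \<Rightarrow> if ts = [] then s else Var 0)"
| "trunc (Suc k) (Var y) = Var y"
| "trunc (Suc k) (App f ts) = App f (map (trunc k) ts)"

lemma trunc_sapp:
  "(\<And>x h. h \<in> occ_heights x t \<Longrightarrow> k + h = d x) \<Longrightarrow> k + hgt t \<le> H \<Longrightarrow>
   (\<And>x. x \<in> vars t \<Longrightarrow> \<sigma> x = trunc (H - d x) (\<theta> x)) \<Longrightarrow> trunc (H - k) (sapp \<theta> t) = sapp \<sigma> t"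
proof (induction t arbitrary: k)
  case (Var x)
  then show ?case
    using Var(1)[where x = x and h = 0] by simp
next
  case (App f ts)
  show ?case
  proof (cases "H - k")
    case 0
    with App.prems(2) have "ts = []"
      by (cases ts) auto
    then show ?thesis using 0 by simp
  next
    case (Suc m)
    have "trunc (H - Suc k) (sapp \<theta> c) = sapp \<sigma> c" if c: "c \<in> set ts" for c
    proof (rule App.IH[OF c])
      show "Suc k + h = d x" if "h \<in> occ_heights x c" for x h
        using App.prems(1)[of "Suc h" x] that c by auto
      show "Suc k + hgt c \<le> H"
        using App.prems(2) c unfolding hgt_App_le by blast
      show "\<sigma> x = trunc (H - d x) (\<theta> x)" if "x \<in> vars c" for x
        using App.prems(3)[of x] that c by auto
    qed
    moreover have "H - Suc k = m"
      using Suc by simp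
    ultimately show ?thesis
      using Suc by simp
  qed
qed

lemma trunc_instance_hgt: "sapp \<tau> s = trunc m s \<Longrightarrow> hgt s \<le> m"
proof (induction s arbitrary: m)
  case (App f ts)
  show ?case
  proof (cases m)
    case 0
    then show ?thesis using App.prems by (auto split: if_splits)
  next
    case (Suc m')
    have "Suc (hgt c) \<le> m" if "c \<in> set ts" for c
    proof -
      from App.prems that Suc have "sapp \<tau> c = trunc m' c"
        by (simp add: map_eq_conv)
      from App.IH[OF that this] Suc show ?thesis by simp
    qed
    then show ?thesis
      using hgt_App_le[of 0 f ts m] by simp
  qed
qed simp

(* If s, t are at levels d, then for an mgu \<theta> the term \<theta> x, placed at level d x, fits below
   max (hgt s) (hgt t), and \<theta> x has height 0 for all other variables x: the suitably
   truncated \<theta> is a unifier, hence an instance of \<theta>. *)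
lemma mgu_hgt_images:
  assumes mgu: "mgu \<theta> s t" and s: "at_levels d s" and t: "at_levels d t"
  shows "\<And>x. x \<in> vars s \<union> vars t \<Longrightarrow> d x + hgt (\<theta> x) \<le> max (hgt s) (hgt t)"
    and "\<And>x. x \<notin> vars s \<union> vars t \<Longrightarrow> hgt (\<theta> x) = 0"
proof -
  define H where "H = max (hgt s) (hgt t)"
  define \<sigma> where
    "\<sigma> x = (if x \<in> vars s \<union> vars t then trunc (H - d x) (\<theta> x) else trunc 0 (\<theta> x))" for x
  have "trunc (H - 0) (sapp \<theta> s) = sapp \<sigma> s"
    by (rule trunc_sapp) (use s in \<open>auto simp: at_levels_def H_def \<sigma>_def\<close>)
  moreover have "trunc (H - 0) (sapp \<theta> t) = sapp \<sigma> t"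
    by (rule trunc_sapp) (use t in \<open>auto simp: at_levels_def H_def \<sigma>_def\<close>)
  ultimately
  have "sapp \<sigma> s = sapp \<sigma> t"
    using mguD(1)[OF mgu] by simp
  from mguD(2)[OF mgu this] obtain \<tau> where \<tau>: "\<And>x. \<sigma> x = sapp \<tau> (\<theta> x)"
    by blast
  show "d x + hgt (\<theta> x) \<le> H" if x: "x \<in> vars s \<union> vars t" for x
  proof -
    have "hgt (\<theta> x) \<le> H - d x"
      using \<tau>[of x] x by (intro trunc_instance_hgt[of \<tau>]) (simp add: \<sigma>_def)
    moreover have "d x \<le> H"
      using x at_levels_le_hgt[OF s, of x] at_levels_le_hgt[OF t, of x] by (auto simp: H_def)
    ultimately show ?thesis by simp
  qed
  show "hgt (\<theta> x) = 0" if "x \<notin> vars s \<union> vars t" for x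
    using \<tau>[of x] that trunc_instance_hgt[of \<tau> "\<theta> x" 0] by (simp add: \<sigma>_def)
qed

lemma hgt_sapp_le:
  "(\<And>x h. h \<in> occ_heights x t \<Longrightarrow> k + h + hgt (\<theta> x) \<le> B) \<Longrightarrow> k + hgt t \<le> B \<Longrightarrow>
   k + hgt (sapp \<theta> t) \<le> B"
proof (induction t arbitrary: k)
  case (Var x)
  then show ?case
    using Var(1)[where x = x and h = 0] by simp
next
  case (App f ts)
  have "Suc k + hgt (sapp \<theta> c) \<le> B" if c: "c \<in> set ts" for c
  proof (rule App.IH[OF c])
    show "Suc k + h + hgt (\<theta> x) \<le> B" if "h \<in> occ_heights x c" for x h
      using App.prems(1)[of "Suc h" x] that c by auto
    show "Suc k + hgt c \<le> B"
      using App.prems(2) c unfolding hgt_App_le by blast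
  qed
  then show ?case
    using App.prems(2) unfolding sapp.simps hgt_App_le by auto
qed

lemma mgu_hgt_le:
  assumes mgu: "mgu \<theta> s t" and s: "at_levels d s" and t: "at_levels d t" and u: "at_levels d u"
  shows "hgt (sapp \<theta> u) \<le> max (max (hgt s) (hgt t)) (hgt u)"
proof -
  let ?M = "max (max (hgt s) (hgt t)) (hgt u)"
  have "0 + h + hgt (\<theta> x) \<le> ?M" if h: "h \<in> occ_heights x u" for x h
  proof (cases "x \<in> vars s \<union> vars t")
    case True
    have "h = d x"
      using u h by (simp add: at_levels_def)
    then show ?thesis
      using mgu_hgt_images(1)[OF mgu s t True] by simp
  next
    case False
    then show ?thesis
      using mgu_hgt_images(2)[OF mgu s t False] occ_height_le_hgt[OF h] by simp
  qed
  then have "0 + hgt (sapp \<theta> u) \<le> ?M"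
    by (rule hgt_sapp_le) auto
  then show ?thesis by simp
qed

fun wfify :: "trm \<Rightarrow> trm" where
  "wfify (Var y) = Var y"
| "wfify (App f ts) = (if length ts = arity f then App f (map wfify ts) else Var 0)"

lemma wfify_sapp: "wf_trm t \<Longrightarrow> wfify (sapp \<theta> t) = sapp (\<lambda>x. wfify (\<theta> x)) t"
  by (induction t) auto

lemma wfify_instance: "sapp \<tau> s = wfify s \<Longrightarrow> wf_trm s"
proof (induction s)
  case (App f ts)
  then show ?case by (auto split: if_splits simp: map_eq_conv)
qed simp

(* An mgu of well-formed terms is well-formed: the repaired mgu is a unifier. *)
lemma mgu_wf:
  assumes mgu: "mgu \<theta> s t" and wf_s: "wf_trm s" and wf_t: "wf_trm t"
  shows "wf_trm (\<theta> x)"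
proof -
  have "sapp (\<lambda>x. wfify (\<theta> x)) s = wfify (sapp \<theta> s)"
    using wfify_sapp[OF wf_s] by simp
  also have "\<dots> = wfify (sapp \<theta> t)"
    using mguD(1)[OF mgu] by simp
  also have "\<dots> = sapp (\<lambda>x. wfify (\<theta> x)) t"
    using wfify_sapp[OF wf_t] by simp
  finally obtain \<tau> where "\<And>x. wfify (\<theta> x) = sapp \<tau> (\<theta> x)"
    using mguD(2)[OF mgu] by blast
  then show ?thesis
    using wfify_instance by metis
qed

abbreviation rename :: "(nat \<Rightarrow> nat) \<Rightarrow> trm \<Rightarrow> trm" where
  "rename \<pi> t \<equiv> sapp (\<lambda>x. Var (\<pi> x)) t"

lemma occ_heights_rename: "bij \<pi> \<Longrightarrow> occ_heights y (rename \<pi> t) = occ_heights (inv \<pi> y) t"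
  by (induction t) (auto simp: bij_inv_eq_iff bij_is_inj bij_is_surj surj_f_inv_f)

lemma hgt_rename: "hgt (rename \<pi> t) = hgt t"
proof (induction t)
  case (App f ts)
  then have "hgt ` rename \<pi> ` set ts = hgt ` set ts"
    by (force simp: image_image)
  then show ?case by simp
qed simp

lemma wf_rename: "wf_trm (rename \<pi> t) = wf_trm t"
  by (induction t) auto

lemma vars_rename: "vars (rename \<pi> t) = \<pi> ` vars t"
  by (simp add: vars_sapp) blast

lemma rename_rename: "rename \<alpha> (rename \<beta> t) = rename (\<alpha> \<circ> \<beta>) t"
  by (simp add: sapp_comp)

definition ren :: "(nat \<Rightarrow> nat) \<Rightarrow> trm \<times> trm \<Rightarrow> trm \<times> trm" where
  "ren \<pi> p = (rename \<pi> (fst p), rename \<pi> (snd p))"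

lemma balanced_ren: "bij \<pi> \<Longrightarrow> balanced p \<Longrightarrow> balanced (ren \<pi> p)"
  by (simp add: balanced_def ren_def occ_heights_rename)

lemma is_flow_ren: "is_flow p \<Longrightarrow> is_flow (ren \<pi> p)"
  unfolding is_flow_def ren_def by (auto simp: wf_rename vars_rename)

lemma flow_prodE:
  assumes "flow_prod f g r"
  obtains \<pi> \<theta> where "bij \<pi>"
    "(vars (fst f) \<union> vars (snd f)) \<inter> (vars (rename \<pi> (fst g)) \<union> vars (rename \<pi> (snd g))) = {}"
    "mgu \<theta> (snd f) (rename \<pi> (fst g))"
    "r = (sapp \<theta> (fst f), sapp \<theta> (rename \<pi> (snd g)))"
  using assms unfolding flow_prod_def renaming_def by blast

lemma flow_prod_balanced_hgt:
  assumes f: "balanced f" and g: "balanced g" and r: "flow_prod f g r"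
  shows "balanced r" and "flow_hgt r \<le> max (flow_hgt f) (flow_hgt g)"
proof -
  obtain \<pi> \<theta> where \<pi>: "bij \<pi>"
    and disj: "(vars (fst f) \<union> vars (snd f)) \<inter>
                 (vars (rename \<pi> (fst g)) \<union> vars (rename \<pi> (snd g))) = {}"
    and mgu: "mgu \<theta> (snd f) (rename \<pi> (fst g))"
    and r_eq: "r = (sapp \<theta> (fst f), sapp \<theta> (rename \<pi> (snd g)))"
    using r by (rule flow_prodE)
  obtain d1 where "at_levels d1 (fst f)" "at_levels d1 (snd f)"
    using f balanced_iff_levels by blast
  moreover obtain d2 where "at_levels d2 (rename \<pi> (fst g))" "at_levels d2 (rename \<pi> (snd g))"
    using balanced_ren[OF \<pi> g] balanced_iff_levels by (auto simp: ren_def)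
  ultimately obtain d where d: "at_levels d (fst f)" "at_levels d (snd f)"
    "at_levels d (rename \<pi> (fst g))" "at_levels d (rename \<pi> (snd g))"
    using disj by (rule at_levels_glue)
  obtain e where e: "\<And>u. at_levels d u \<Longrightarrow> at_levels e (sapp \<theta> u)"
    using mgu_at_levels[OF mgu d(2,3)] by blast
  show "balanced r"
    unfolding balanced_iff_levels r_eq using e d by auto
  have "hgt (sapp \<theta> (fst f)) \<le> max (max (hgt (snd f)) (hgt (fst g))) (hgt (fst f))"
    using mgu_hgt_le[OF mgu d(2,3,1)] by (simp add: hgt_rename)
  moreover have "hgt (sapp \<theta> (rename \<pi> (snd g))) \<le>
      max (max (hgt (snd f)) (hgt (fst g))) (hgt (snd g))"
    using mgu_hgt_le[OF mgu d(2,3,4)] by (simp add: hgt_rename)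
  ultimately show "flow_hgt r \<le> max (flow_hgt f) (flow_hgt g)"
    unfolding r_eq flow_hgt_def by auto
qed

(* The product of flows is a flow: the mgu is well-formed, and the variable inclusions
   var u \<subseteq> var v = var t \<subseteq> var w survive unification. *)
lemma flow_prod_is_flow:
  assumes f: "is_flow f" and g: "is_flow g" and r: "flow_prod f g r"
  shows "is_flow r"
proof -
  obtain \<pi> \<theta> where mgu: "mgu \<theta> (snd f) (rename \<pi> (fst g))"
    and r_eq: "r = (sapp \<theta> (fst f), sapp \<theta> (rename \<pi> (snd g)))"
    using r by (rule flow_prodE)
  have wf: "wf_trm (fst f)" "wf_trm (snd f)" "wf_trm (rename \<pi> (fst g))" "wf_trm (rename \<pi> (snd g))"
    using f g by (simp_all add: is_flow_def wf_rename)
  have wf_\<theta>: "wf_trm (\<theta> x)" for x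
    using mgu_wf[OF mgu wf(2,3)] .
  have "vars (sapp \<theta> (fst f)) \<subseteq> vars (sapp \<theta> (snd f))"
    using f by (auto simp: is_flow_def vars_sapp)
  also have "\<dots> = vars (sapp \<theta> (rename \<pi> (fst g)))"
    using mguD(1)[OF mgu] by simp
  also have "\<dots> \<subseteq> vars (sapp \<theta> (rename \<pi> (snd g)))"
    using g by (auto simp: is_flow_def vars_sapp vars_rename)
  finally show ?thesis
    unfolding is_flow_def r_eq using wf wf_\<theta> by (auto intro: wf_sapp)
qed

section \<open>Uniqueness of products up to renaming\<close>

lemma extend_bij:
  fixes \<pi> :: "nat \<Rightarrow> nat"
  assumes "finite Y" "inj_on \<pi> Y"
  obtains \<pi>' where "bij \<pi>'" "\<And>y. y \<in> Y \<Longrightarrow> \<pi>' y = \<pi> y"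
proof -
  let ?A = "UNIV - Y" and ?B = "UNIV - \<pi> ` Y"
  have "bij_betw (from_nat_into ?A) UNIV ?A" "bij_betw (from_nat_into ?B) UNIV ?B"
    using assms(1) by (auto intro!: bij_betw_from_nat_into simp: Diff_infinite_finite)
  then have g: "bij_betw (from_nat_into ?B \<circ> inv_into UNIV (from_nat_into ?A)) ?A ?B"
    by (blast intro: bij_betw_trans bij_betw_inv_into)
  define \<pi>' where "\<pi>' x = (if x \<in> Y then \<pi> x else (from_nat_into ?B \<circ> inv_into UNIV (from_nat_into ?A)) x)" for x
  have "bij_betw \<pi>' Y (\<pi> ` Y)"
    using inj_on_imp_bij_betw[OF assms(2)] by (rule bij_betw_cong[THEN iffD1, rotated]) (simp add: \<pi>'_def)
  moreover have "bij_betw \<pi>' ?A ?B"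
    using g by (rule bij_betw_cong[THEN iffD1, rotated]) (simp add: \<pi>'_def)
  ultimately have "bij_betw \<pi>' (Y \<union> ?A) (\<pi> ` Y \<union> ?B)"
    by (rule bij_betw_combine) auto
  then show ?thesis
    using that by (simp add: \<pi>'_def)
qed

lemma sapp_inverse_var:
  "sapp \<tau>' (sapp \<tau> s) = s \<Longrightarrow> y \<in> vars s \<Longrightarrow> \<exists>y'. \<tau> y = Var y' \<and> \<tau>' y' = Var y"
proof (induction s)
  case (Var x)
  then show ?case by (cases "\<tau> x") auto
next
  case (App f ts)
  then obtain c where c: "c \<in> set ts" "y \<in> vars c"
    by auto
  have "map (\<lambda>c. sapp \<tau>' (sapp \<tau> c)) ts = map id ts"
    using App.prems(1) by (simp add: comp_def)
  then have "sapp \<tau>' (sapp \<tau> c) = c"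
    using c(1) unfolding map_eq_conv by simp
  from App.IH[OF c(1) this c(2)] show ?case .
qed

lemma inverse_instance_renaming:
  assumes "finite V" and inv: "\<And>z. z \<in> V \<Longrightarrow> sapp \<tau>' (sapp \<tau> (\<theta> z)) = \<theta> z"
  obtains \<pi> where "bij \<pi>" "\<And>u. vars u \<subseteq> V \<Longrightarrow> sapp \<tau> (sapp \<theta> u) = rename \<pi> (sapp \<theta> u)"
proof -
  define Y where "Y = (\<Union>z\<in>V. vars (\<theta> z))"
  define \<pi>0 where "\<pi>0 y = (case \<tau> y of Var y' \<Rightarrow> y' | _ \<Rightarrow> y)" for y
  have \<pi>0: "\<tau> y = Var (\<pi>0 y) \<and> \<tau>' (\<pi>0 y) = Var y" if "y \<in> Y" for y
    using that inv sapp_inverse_var unfolding Y_def \<pi>0_def by fastforce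
  have "inj_on \<pi>0 Y"
    by (rule inj_onI) (metis \<pi>0 trm.inject(1))
  moreover have "finite Y"
    using assms(1) by (simp add: Y_def finite_vars)
  ultimately obtain \<pi> where \<pi>: "bij \<pi>" "\<And>y. y \<in> Y \<Longrightarrow> \<pi> y = \<pi>0 y"
    using extend_bij by blast
  have "sapp \<tau> (sapp \<theta> u) = rename \<pi> (sapp \<theta> u)" if "vars u \<subseteq> V" for u
    using that \<pi>(2) \<pi>0 by (intro sapp_cong) (force simp: vars_sapp Y_def)
  with \<pi>(1) that show ?thesis by blast
qed

(* Most general unifiers are unique up to renaming, also when the unified terms are renamed
   by a map k that is injective on the relevant (finitely many) variables V: each of the two
   mgus is an instance of the other. *)
lemma mgu_rename_unique:
  assumes mgu: "mgu \<theta> s t" and mgu': "mgu \<theta>' (rename k s) (rename k t)"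
    and inj: "inj_on k V" and V: "finite V" "vars s \<union> vars t \<subseteq> V"
  obtains \<pi> where "bij \<pi>" "\<And>u. vars u \<subseteq> V \<Longrightarrow> rename \<pi> (sapp \<theta> u) = sapp \<theta>' (rename k u)"
proof -
  define \<eta> where "\<eta> x = \<theta>' (k x)" for x
  have \<eta>_eq: "sapp \<theta>' (rename k u) = sapp \<eta> u" for u
    by (simp add: sapp_comp \<eta>_def[abs_def])
  have "sapp \<eta> s = sapp \<eta> t"
    using mguD(1)[OF mgu'] by (simp add: \<eta>_eq)
  from mguD(2)[OF mgu this] obtain \<tau> where \<tau>: "\<And>x. \<eta> x = sapp \<tau> (\<theta> x)"
    by blast
  define \<sigma> where "\<sigma> x = (if x \<in> k ` V then \<theta> (inv_into V k x) else \<theta>' x)" for x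
  have \<sigma>_k: "\<sigma> (k z) = \<theta> z" if "z \<in> V" for z
    using that inj by (simp add: \<sigma>_def inv_into_f_f)
  have \<sigma>_eq: "sapp \<sigma> (rename k u) = sapp \<theta> u" if "vars u \<subseteq> V" for u
    using that by (auto simp: sapp_comp \<sigma>_k intro!: sapp_cong)
  have "sapp \<sigma> (rename k s) = sapp \<sigma> (rename k t)"
    using V(2) \<sigma>_eq[of s] \<sigma>_eq[of t] mguD(1)[OF mgu] by simp
  from mguD(2)[OF mgu' this] obtain \<tau>' where \<tau>': "\<And>x. \<sigma> x = sapp \<tau>' (\<theta>' x)"
    by blast
  have "sapp \<tau>' (sapp \<tau> (\<theta> z)) = \<theta> z" if "z \<in> V" for z
    using \<sigma>_k[OF that] \<tau>'[of "k z"] \<tau>[of z] by (simp add: \<eta>_def)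
  with V(1) obtain \<pi> where \<pi>: "bij \<pi>"
    "\<And>u. vars u \<subseteq> V \<Longrightarrow> sapp \<tau> (sapp \<theta> u) = rename \<pi> (sapp \<theta> u)"
    using inverse_instance_renaming by blast
  have "rename \<pi> (sapp \<theta> u) = sapp \<theta>' (rename k u)" if "vars u \<subseteq> V" for u
  proof -
    have "rename \<pi> (sapp \<theta> u) = sapp \<tau> (sapp \<theta> u)"
      using \<pi>(2)[OF that] by simp
    also have "\<dots> = sapp \<eta> u"
      by (simp add: sapp_comp \<tau>[symmetric])
    finally show ?thesis
      by (simp add: \<eta>_eq)
  qed
  with \<pi>(1) that show ?thesis by blast
qed

lemma ren_comp: "ren \<alpha> (ren \<beta> p) = ren (\<alpha> \<circ> \<beta>) p"
  by (simp add: ren_def rename_rename comp_def)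

lemma ren_id: "ren id p = p"
  by (simp add: ren_def sapp_Var[unfolded id_def] id_def)

lemma ren_eq_iff: "ren_eq p q \<longleftrightarrow> (\<exists>\<pi>. bij \<pi> \<and> q = ren \<pi> p)"
  unfolding ren_eq_def renaming_def ren_def by auto

lemma ren_eq_sym: "ren_eq p q \<Longrightarrow> ren_eq q p"
proof -
  assume "ren_eq p q"
  then obtain \<pi> where \<pi>: "bij \<pi>" "q = ren \<pi> p"
    by (auto simp: ren_eq_iff)
  then have "p = ren (inv \<pi>) q"
    by (simp add: ren_comp bij_is_inj ren_id)
  with \<pi>(1) show ?thesis
    using bij_imp_bij_inv unfolding ren_eq_iff by blast
qed

lemma ren_eq_trans: "ren_eq p q \<Longrightarrow> ren_eq q r \<Longrightarrow> ren_eq p r"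
  unfolding ren_eq_iff by (metis bij_comp ren_comp)

lemma cls_eq: "ren_eq p q \<Longrightarrow> cls p = cls q"
  unfolding cls_def by (blast intro: ren_eq_trans ren_eq_sym)

lemma class_ren:
  assumes "F \<in> flow_classes" "p1 \<in> F" "p2 \<in> F"
  obtains \<alpha> where "bij \<alpha>" "p2 = ren \<alpha> p1"
proof -
  obtain p0 where "F = cls p0"
    using assms(1) by (auto simp: flow_classes_def)
  then have "ren_eq p1 p2"
    using assms(2,3) by (auto simp: cls_def intro: ren_eq_trans ren_eq_sym)
  then show ?thesis
    using that by (auto simp: ren_eq_iff)
qed

lemma glue_renamings:
  assumes \<alpha>: "bij \<alpha>" and \<beta>: "bij \<beta>" and AB: "A \<inter> B = {}" and img: "\<alpha> ` A \<inter> \<beta> ` B = {}"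
  obtains k where "inj_on k (A \<union> B)"
    "\<And>u. vars u \<subseteq> A \<Longrightarrow> rename k u = rename \<alpha> u"
    "\<And>u. vars u \<subseteq> B \<Longrightarrow> rename k u = rename \<beta> u"
proof
  define k where "k x = (if x \<in> A then \<alpha> x else \<beta> x)" for x
  show "inj_on k (A \<union> B)"
  proof (rule inj_onI)
    fix x y assume "x \<in> A \<union> B" "y \<in> A \<union> B" "k x = k y"
    then show "x = y"
      using img bij_is_inj[OF \<alpha>] bij_is_inj[OF \<beta>]
      by (cases "x \<in> A"; cases "y \<in> A") (auto simp: k_def inj_eq)
  qed
  show "rename k u = rename \<alpha> u" if "vars u \<subseteq> A" for u
    using that by (intro sapp_cong) (auto simp: k_def)
  show "rename k u = rename \<beta> u" if "vars u \<subseteq> B" for u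
    using that AB by (intro sapp_cong) (auto simp: k_def)
qed

lemma flow_prod_ren_invariant:
  assumes r1: "flow_prod p q r1" and r2: "flow_prod (ren \<alpha> p) (ren \<gamma> q) r2"
    and \<alpha>: "bij \<alpha>" and \<gamma>: "bij \<gamma>"
  shows "ren_eq r1 r2"
proof -
  obtain \<pi>1 \<theta>1 where \<pi>1: "bij \<pi>1"
    and disj1: "(vars (fst p) \<union> vars (snd p)) \<inter>
                  (vars (rename \<pi>1 (fst q)) \<union> vars (rename \<pi>1 (snd q))) = {}"
    and mgu1: "mgu \<theta>1 (snd p) (rename \<pi>1 (fst q))"
    and r1_eq: "r1 = (sapp \<theta>1 (fst p), sapp \<theta>1 (rename \<pi>1 (snd q)))"
    using r1 by (rule flow_prodE)
  obtain \<pi>2 \<theta>2 where \<pi>2: "bij \<pi>2"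
    and disj2: "(vars (rename \<alpha> (fst p)) \<union> vars (rename \<alpha> (snd p))) \<inter>
                  (vars (rename \<pi>2 (rename \<gamma> (fst q))) \<union> vars (rename \<pi>2 (rename \<gamma> (snd q)))) = {}"
    and mgu2: "mgu \<theta>2 (rename \<alpha> (snd p)) (rename \<pi>2 (rename \<gamma> (fst q)))"
    and r2_eq: "r2 = (sapp \<theta>2 (rename \<alpha> (fst p)), sapp \<theta>2 (rename \<pi>2 (rename \<gamma> (snd q))))"
    using r2 by (rule flow_prodE) (auto simp: ren_def)
  (* The two products rename q by \<pi>1 and by \<pi>2 \<circ> \<gamma>; \<beta> converts the first into the second. *)
  define \<beta> where "\<beta> = \<pi>2 \<circ> \<gamma> \<circ> inv \<pi>1"
  have \<beta>: "bij \<beta>"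
    unfolding \<beta>_def using \<pi>1 \<pi>2 \<gamma> by (intro bij_comp bij_imp_bij_inv)
  have \<beta>_\<pi>1: "rename \<beta> (rename \<pi>1 u) = rename \<pi>2 (rename \<gamma> u)" for u
    using \<pi>1 by (simp add: rename_rename \<beta>_def comp_def bij_is_inj)
  define A where "A = vars (fst p) \<union> vars (snd p)"
  define B where "B = vars (rename \<pi>1 (fst q)) \<union> vars (rename \<pi>1 (snd q))"
  have "\<alpha> ` A = vars (rename \<alpha> (fst p)) \<union> vars (rename \<alpha> (snd p))"
    by (simp add: A_def vars_rename image_Un)
  moreover have "\<beta> ` B = vars (rename \<pi>2 (rename \<gamma> (fst q))) \<union> vars (rename \<pi>2 (rename \<gamma> (snd q)))"
    by (simp only: B_def image_Un vars_rename[symmetric] \<beta>_\<pi>1)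
  ultimately have "\<alpha> ` A \<inter> \<beta> ` B = {}"
    using disj2 by simp
  moreover have "A \<inter> B = {}"
    using disj1 by (simp add: A_def B_def)
  ultimately obtain k where k: "inj_on k (A \<union> B)"
    and k_A: "\<And>u. vars u \<subseteq> A \<Longrightarrow> rename k u = rename \<alpha> u"
    and k_B': "\<And>u. vars u \<subseteq> B \<Longrightarrow> rename k u = rename \<beta> u"
    using glue_renamings[OF \<alpha> \<beta>] by blast
  have k_B: "rename k (rename \<pi>1 u) = rename \<pi>2 (rename \<gamma> u)" if "vars (rename \<pi>1 u) \<subseteq> B" for u
    using k_B'[OF that] \<beta>_\<pi>1 by simp
  have "mgu \<theta>2 (rename k (snd p)) (rename k (rename \<pi>1 (fst q)))"
    using mgu2 k_A k_B by (simp add: A_def B_def)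
  then obtain \<pi> where \<pi>: "bij \<pi>"
    "\<And>u. vars u \<subseteq> A \<union> B \<Longrightarrow> rename \<pi> (sapp \<theta>1 u) = sapp \<theta>2 (rename k u)"
    using mgu_rename_unique[OF mgu1 _ k, of \<theta>2]
    by (auto simp: A_def B_def finite_vars)
  have "rename \<pi> (sapp \<theta>1 (fst p)) = sapp \<theta>2 (rename \<alpha> (fst p))"
    using \<pi>(2)[of "fst p"] k_A[of "fst p"] by (auto simp: A_def)
  moreover have "rename \<pi> (sapp \<theta>1 (rename \<pi>1 (snd q))) = sapp \<theta>2 (rename \<pi>2 (rename \<gamma> (snd q)))"
    using \<pi>(2)[of "rename \<pi>1 (snd q)"] k_B[of "snd q"] by (auto simp: B_def)
  ultimately have "r2 = ren \<pi> r1"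
    by (simp add: r1_eq r2_eq ren_def)
  with \<pi>(1) show ?thesis
    by (auto simp: ren_eq_iff)
qed

(* The product of two flow classes is empty or a single class. *)
lemma cprod_finite:
  assumes F: "F \<in> flow_classes" and G: "G \<in> flow_classes"
  shows "finite (cprod F G)"
proof (cases "cprod F G = {}")
  case False
  then obtain p1 q1 r1 where r1: "p1 \<in> F" "q1 \<in> G" "flow_prod p1 q1 r1"
    unfolding cprod_def by blast
  have "cprod F G \<subseteq> {cls r1}"
  proof
    fix c assume "c \<in> cprod F G"
    then obtain p2 q2 r2 where r2: "c = cls r2" "p2 \<in> F" "q2 \<in> G" "flow_prod p2 q2 r2"
      unfolding cprod_def by blast
    obtain \<alpha> where "bij \<alpha>" "p2 = ren \<alpha> p1"
      using F r1(1) r2(2) by (rule class_ren)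
    moreover obtain \<gamma> where "bij \<gamma>" "q2 = ren \<gamma> q1"
      using G r1(2) r2(3) by (rule class_ren)
    ultimately have "ren_eq r1 r2"
      using flow_prod_ren_invariant r1(3) r2(4) by blast
    then show "c \<in> {cls r1}"
      using r2(1) cls_eq by simp
  qed
  then show ?thesis
    using finite_subset by blast
qed simp

lemma class_is_flow:
  assumes "F \<in> flow_classes" "p \<in> F"
  shows "is_flow p"
proof -
  obtain p0 where p0: "is_flow p0" "F = cls p0"
    using assms(1) by (auto simp: flow_classes_def)
  then obtain \<pi> where "p = ren \<pi> p0"
    using assms(2) by (auto simp: cls_def ren_eq_iff)
  with p0(1) show ?thesis
    by (simp add: is_flow_ren)
qed

lemma class_balanced:
  assumes "balanced r" "p \<in> cls r"
  shows "balanced p"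
proof -
  obtain \<pi> where "bij \<pi>" "p = ren \<pi> r"
    using assms(2) by (auto simp: cls_def ren_eq_iff)
  with assms(1) show ?thesis
    by (simp add: balanced_ren)
qed

lemma wprod_balanced:
  assumes A: "A \<in> balanced_wirings" and B: "B \<in> balanced_wirings"
  shows "wprod A B \<in> balanced_wirings"
proof -
  have classes: "A \<subseteq> flow_classes" "B \<subseteq> flow_classes" and fin: "finite A" "finite B"
    using A B by (auto simp: balanced_wirings_def wiring_def)
  have "wprod A B = \<Union> ((\<lambda>(f, g). cprod f g) ` (A \<times> B))"
    unfolding wprod_def by auto
  then have "finite (wprod A B)"
    using classes fin by (auto intro!: cprod_finite)
  moreover have "c \<in> flow_classes \<and> (\<forall>p\<in>c. balanced p)" if c_mem: "c \<in> wprod A B" for c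
  proof -
    obtain f g p q r where fg: "f \<in> A" "g \<in> B" "p \<in> f" "q \<in> g"
      and r: "flow_prod p q r" and c: "c = cls r"
      using c_mem unfolding wprod_def cprod_def by blast
    have "is_flow p" "is_flow q"
      using classes fg class_is_flow by blast+
    moreover have "balanced p" "balanced q"
      using A B fg by (auto simp: balanced_wirings_def)
    ultimately have "is_flow r" "balanced r"
      using r flow_prod_is_flow flow_prod_balanced_hgt(1) by blast+
    then show ?thesis
      unfolding c flow_classes_def using class_balanced by blast
  qed
  ultimately show ?thesis
    by (auto simp: balanced_wirings_def wiring_def)
qed

theorem mainTheorem4:
  shows "(\<forall>f g r. is_flow f \<longrightarrow> is_flow g \<longrightarrow> balanced f \<longrightarrow> balanced g \<longrightarrow>
            flow_prod f g r \<longrightarrow>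
            balanced r \<and> flow_hgt r \<le> max (flow_hgt f) (flow_hgt g))
       \<and> (\<forall>A\<in>balanced_wirings. \<forall>B\<in>balanced_wirings. wprod A B \<in> balanced_wirings)
       \<and> semiring_of_wirings balanced_wirings"
proof (intro conjI)
  show "\<forall>f g r. is_flow f \<longrightarrow> is_flow g \<longrightarrow> balanced f \<longrightarrow> balanced g \<longrightarrow>
            flow_prod f g r \<longrightarrow>
            balanced r \<and> flow_hgt r \<le> max (flow_hgt f) (flow_hgt g)"
    using flow_prod_balanced_hgt by blast
  show products: "\<forall>A\<in>balanced_wirings. \<forall>B\<in>balanced_wirings. wprod A B \<in> balanced_wirings"
    using wprod_balanced by blast
  show "semiring_of_wirings balanced_wirings"
    unfolding semiring_of_wirings_def
  proof (intro conjI)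
    show "\<forall>W\<in>balanced_wirings. wiring W"
      by (simp add: balanced_wirings_def)
    show "{} \<in> balanced_wirings"
      by (simp add: balanced_wirings_def wiring_def)
    show "\<forall>A\<in>balanced_wirings. \<forall>B\<in>balanced_wirings. A \<union> B \<in> balanced_wirings"
      by (auto simp: balanced_wirings_def wiring_def)
  qed (rule products)
qed

end
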